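(* Let $Q$ be a set, $(F_i)_{i\in I}$ a family of real-valued maps on $Q$ and $(k_i)_{i\in I}$ a bounded family of nonnegative reals. Assume $\sum_{t\in S}|F_i(t)|\le k_i\mod c_0(I)$ for every finite $S\subseteq Q$, and that $\{i\in I:F_i(t)\ne0\}$ is countable for every $t\in Q$. Then the following are equivalent: (a) $(F_i)_{i\in I}$ is of type $c_0\ell_1$; (b) there exist disjoint sets $A,B$ with $I\times Q=A\cup B$ such that $\lim_{i\in I}F_i(t)\chi_A(i,t)=0$ for all $t\in Q$ and $B_i=\{t\in Q:(i,t)\in B\}$ is countable for all $i\in I$; (c) $(F_i)_{i\in I}$ is of type $c_0\ell_1$ bounded by $(k_i)_{i\in I}$.
   Context: $\lim_{i\in I}a_i=0$ means $\{i:|a_i|\ge\varepsilon\}$ is finite for every $\varepsilon>0$; $c_0(I)$ is the set of such families. "$x_i\le y_i\mod c_0(I)$" means $\{i:x_i\ge y_i+\varepsilon\}$ is finite for every $\varepsilon>0$. $\chi_A$ is the characteristic function of $A$. $(F_i)$ is of type $c_0\ell_1$ if $F_i(t)=a_{i,t}+b_{i,t}$ ($i\in I$, $t\in Q$) with $\lim_ia_{i,t}=0$ for each $t\in Q$ and $\sup_i\sum_{t\in Q}|b_{i,t}|<\infty$; it is of type $c_0\ell_1$ bounded by $(k_i)$ if additionally $\sum_{t\in Q}|b_{i,t}|\le k_i$ for each $i$. *)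

theory Defs
  imports "HOL-Library.Countable_Set" "HOL-Library.Indicator_Function" Complex_Main
begin

definition lim_zero :: "'i set \<Rightarrow> ('i \<Rightarrow> real) \<Rightarrow> bool" where
  "lim_zero I a \<longleftrightarrow> (\<forall>\<epsilon>>0. finite {i\<in>I. \<bar>a i\<bar> \<ge> \<epsilon>})"

definition le_mod_c0 :: "'i set \<Rightarrow> ('i \<Rightarrow> real) \<Rightarrow> ('i \<Rightarrow> real) \<Rightarrow> bool" where
  "le_mod_c0 I x y \<longleftrightarrow> (\<forall>\<epsilon>>0. finite {i\<in>I. x i \<ge> y i + \<epsilon>})"

text \<open>Sum over Q of the nonnegative terms |b t| is at most C (unordered sum = sup of finite partial sums).\<close>
definition abs_sum_le :: "'t set \<Rightarrow> ('t \<Rightarrow> real) \<Rightarrow> real \<Rightarrow> bool" where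
  "abs_sum_le Q b C \<longleftrightarrow> (\<forall>S. finite S \<and> S \<subseteq> Q \<longrightarrow> (\<Sum>t\<in>S. \<bar>b t\<bar>) \<le> C)"

definition type_c0l1 :: "'i set \<Rightarrow> 't set \<Rightarrow> ('i \<Rightarrow> 't \<Rightarrow> real) \<Rightarrow> bool" where
  "type_c0l1 I Q F \<longleftrightarrow> (\<exists>a b. (\<forall>i\<in>I. \<forall>t\<in>Q. F i t = a i t + b i t)
      \<and> (\<forall>t\<in>Q. lim_zero I (\<lambda>i. a i t))
      \<and> (\<exists>C. \<forall>i\<in>I. abs_sum_le Q (b i) C))"

definition type_c0l1_bounded :: "'i set \<Rightarrow> 't set \<Rightarrow> ('i \<Rightarrow> 't \<Rightarrow> real) \<Rightarrow> ('i \<Rightarrow> real) \<Rightarrow> bool" where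
  "type_c0l1_bounded I Q F k \<longleftrightarrow> (\<exists>a b. (\<forall>i\<in>I. \<forall>t\<in>Q. F i t = a i t + b i t)
      \<and> (\<forall>t\<in>Q. lim_zero I (\<lambda>i. a i t))
      \<and> (\<exists>C. \<forall>i\<in>I. abs_sum_le Q (b i) C)
      \<and> (\<forall>i\<in>I. abs_sum_le Q (b i) (k i)))"

end

theory Submission
  imports Defs "HOL-Analysis.Infinite_Sum"
begin

text \<open>
  (a) implies (b) by letting B be the support of the \<open>\<ell>\<^sub>1\<close> part, whose rows are countable;
  (c) implies (a) trivially. For (b) implies (c), restrict F to B. Two points of Q are linked
  when some row of \<open>F\<chi>\<^sub>B\<close> is nonzero at both; the resulting classes are countable, and each
  row lives in a single class. Enumerate every class once and for all, and truncate row i at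
  the longest initial segment of length m on which its absolute sum is at most
  \<open>k\<^sub>i + 1/(m+1)\<close>, scaled by \<open>k\<^sub>i / (k\<^sub>i + 1/(m+1))\<close> (keep the whole row if every m
  qualifies): these truncations are bounded by \<open>k\<^sub>i\<close> in \<open>\<ell>\<^sub>1\<close>. Since all rows that are
  nonzero at t use the same enumeration of the class of t, the hypothesis on finite sums, applied
  to one long initial segment of that class, shows that the remainder at t is small for all but
  finitely many i.
\<close>

lemma lim_zero_add:
  assumes "lim_zero I a" "lim_zero I b"
  shows "lim_zero I (\<lambda>i. a i + b i)"
  unfolding lim_zero_def
proof (intro allI impI)
  fix \<epsilon> :: real assume "\<epsilon> > 0"
  have "{i\<in>I. \<epsilon> \<le> \<bar>a i + b i\<bar>} \<subseteq> {i\<in>I. \<epsilon> / 2 \<le> \<bar>a i\<bar>} \<union> {i\<in>I. \<epsilon> / 2 \<le> \<bar>b i\<bar>}"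
    using abs_triangle_ineq[of "a _" "b _"] by fastforce
  moreover have "finite ({i\<in>I. \<epsilon> / 2 \<le> \<bar>a i\<bar>} \<union> {i\<in>I. \<epsilon> / 2 \<le> \<bar>b i\<bar>})"
    using assms half_gt_zero[OF \<open>\<epsilon> > 0\<close>] unfolding lim_zero_def by blast
  ultimately show "finite {i\<in>I. \<epsilon> \<le> \<bar>a i + b i\<bar>}"
    by (rule finite_subset)
qed

lemma lim_zero_abs_le:
  assumes "lim_zero I b" "\<And>i. i \<in> I \<Longrightarrow> \<bar>a i\<bar> \<le> \<bar>b i\<bar>"
  shows "lim_zero I a"
  unfolding lim_zero_def
proof (intro allI impI)
  fix \<epsilon> :: real assume "\<epsilon> > 0"
  have "{i\<in>I. \<epsilon> \<le> \<bar>a i\<bar>} \<subseteq> {i\<in>I. \<epsilon> \<le> \<bar>b i\<bar>}"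
    using assms(2) by (auto intro: order_trans)
  then show "finite {i\<in>I. \<epsilon> \<le> \<bar>a i\<bar>}"
    using assms(1) \<open>\<epsilon> > 0\<close> finite_subset by (auto simp: lim_zero_def)
qed

lemma le_mod_c0_mono:
  assumes "le_mod_c0 I y k" "\<And>i. i \<in> I \<Longrightarrow> x i \<le> y i"
  shows "le_mod_c0 I x k"
  unfolding le_mod_c0_def
proof (intro allI impI)
  fix \<epsilon> :: real assume "\<epsilon> > 0"
  have "{i\<in>I. k i + \<epsilon> \<le> x i} \<subseteq> {i\<in>I. k i + \<epsilon> \<le> y i}"
    using assms(2) by (auto intro: order_trans)
  then show "finite {i\<in>I. k i + \<epsilon> \<le> x i}"
    using assms(1) \<open>\<epsilon> > 0\<close> finite_subset by (auto simp: le_mod_c0_def)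
qed

lemma abs_sum_le_mono:
  assumes "abs_sum_le Q f C" "C \<le> D"
  shows "abs_sum_le Q f D"
  using assms by (auto simp: abs_sum_le_def)

lemma abs_sum_le_countable_support:
  assumes "abs_sum_le Q f C"
  shows "countable {t\<in>Q. f t \<noteq> 0}"
proof (rule abs_summable_countable)
  show "f abs_summable_on Q"
    unfolding abs_summable_iff_bdd_above
    by (rule bdd_aboveI2[where M = C]) (use assms in \<open>simp add: abs_sum_le_def\<close>)
qed

definition enum_prefix :: "'a set \<Rightarrow> nat \<Rightarrow> 'a set" where
  "enum_prefix C m = {u\<in>C. to_nat_on C u < m}"

lemma finite_enum_prefix:
  assumes "countable C"
  shows "finite (enum_prefix C m)"
proof (rule finite_imageD)
  show "finite (to_nat_on C ` enum_prefix C m)"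
    by (rule finite_subset[of _ "{..<m}"]) (auto simp: enum_prefix_def)
  show "inj_on (to_nat_on C) (enum_prefix C m)"
    using inj_on_to_nat_on[OF assms] by (rule inj_on_subset) (auto simp: enum_prefix_def)
qed

lemma enum_prefix_mono: "m \<le> n \<Longrightarrow> enum_prefix C m \<subseteq> enum_prefix C n"
  by (auto simp: enum_prefix_def)

lemma enum_prefix_0 [simp]: "enum_prefix C 0 = {}"
  by (simp add: enum_prefix_def)

lemma enum_prefix_subset: "enum_prefix C m \<subseteq> C"
  by (auto simp: enum_prefix_def)

lemma finite_subset_in_enum_prefix:
  assumes "finite T" "T \<subseteq> C"
  shows "\<exists>N. \<forall>m\<ge>N. T \<subseteq> enum_prefix C m"
proof -
  obtain N where "to_nat_on C ` T \<subseteq> {..<N}"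
    using finite_nat_bounded[OF finite_imageI[OF assms(1)]] by blast
  then have "\<forall>m\<ge>N. T \<subseteq> enum_prefix C m"
    using assms(2) by (auto simp: enum_prefix_def image_subset_iff)
  then show ?thesis ..
qed

lemma countable_rtrancl_Image:
  assumes "\<And>x. countable (R `` {x})"
  shows "countable (R\<^sup>* `` {t})"
proof -
  have "countable ((R ^^ n) `` {t})" for n
  proof (induction n)
    case 0
    then show ?case by simp
  next
    case (Suc n)
    have "(R ^^ Suc n) `` {t} = R `` ((R ^^ n) `` {t})"
      by (simp add: relcomp_Image)
    also have "\<dots> = (\<Union>x\<in>(R ^^ n) `` {t}. R `` {x})"
      by (rule Image_eq_UN)
    finally show ?case
      using Suc assms by (metis countable_UN)
  qed
  moreover have "R\<^sup>* `` {t} = (\<Union>n. (R ^^ n) `` {t})"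
    using rtrancl_power by blast
  ultimately show ?thesis
    by (metis countable_UN countableI_type)
qed

lemma rtrancl_Image_eq_if_sym:
  assumes "sym R" "(t, u) \<in> R"
  shows "R\<^sup>* `` {t} = R\<^sup>* `` {u}"
proof -
  have "R\<^sup>* `` {b} \<subseteq> R\<^sup>* `` {a}" if "(a, b) \<in> R" for a b
  proof
    fix x assume "x \<in> R\<^sup>* `` {b}"
    then have "(a, x) \<in> R\<^sup>*"
      using converse_rtrancl_into_rtrancl[OF that] by simp
    then show "x \<in> R\<^sup>* `` {a}" by simp
  qed
  moreover have "(u, t) \<in> R"
    using assms(1,2) by (rule symD)
  ultimately show ?thesis
    using assms(2) by (metis subset_antisym)
qed

lemma le_if_frequently_le_plus_inverse_Suc:
  fixes x k :: real
  assumes "infinite P" "\<And>m. m \<in> P \<Longrightarrow> N \<le> m \<Longrightarrow> x \<le> k + 1 / real (Suc m)"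
  shows "x \<le> k"
proof (rule field_le_epsilon)
  fix \<epsilon> :: real assume "0 < \<epsilon>"
  then obtain n where "inverse (real (Suc n)) < \<epsilon>"
    using reals_Archimedean by blast
  then have n: "1 / real (Suc n) < \<epsilon>"
    by (simp add: inverse_eq_divide)
  have "\<forall>m. \<exists>m'\<ge>m. m' \<in> P"
    using assms(1) by (simp add: infinite_nat_iff_unbounded_le)
  then obtain m where m: "m \<in> P" "max N n \<le> m"
    by blast
  then have "1 / real (Suc m) \<le> 1 / real (Suc n)"
    by (intro divide_left_mono) auto
  with n assms(2)[OF m(1)] m(2) show "x \<le> k + \<epsilon>"
    by linarith
qed

lemma abs_sum_le_if_frequently_prefix_bounded:
  assumes "countable C" "{t\<in>Q. g t \<noteq> 0} \<subseteq> C" "infinite P"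
    and bounded: "\<And>m. m \<in> P \<Longrightarrow> (\<Sum>u\<in>enum_prefix C m. \<bar>g u\<bar>) \<le> k + 1 / real (Suc m)"
  shows "abs_sum_le Q g k"
  unfolding abs_sum_le_def
proof (intro allI impI)
  fix T assume T: "finite T \<and> T \<subseteq> Q"
  define T' where "T' = {t\<in>T. g t \<noteq> 0}"
  have "finite T'" "T' \<subseteq> C"
    using T assms(2) by (auto simp: T'_def)
  then obtain N where N: "\<forall>m\<ge>N. T' \<subseteq> enum_prefix C m"
    using finite_subset_in_enum_prefix by blast
  have bound: "(\<Sum>t\<in>T. \<bar>g t\<bar>) \<le> k + 1 / real (Suc m)" if "m \<in> P" "N \<le> m" for m
  proof -
    have "(\<Sum>t\<in>T. \<bar>g t\<bar>) = (\<Sum>t\<in>T'. \<bar>g t\<bar>)"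
      using T by (intro sum.mono_neutral_right) (auto simp: T'_def)
    also have "\<dots> \<le> (\<Sum>u\<in>enum_prefix C m. \<bar>g u\<bar>)"
      using N \<open>N \<le> m\<close> finite_enum_prefix[OF \<open>countable C\<close>] by (intro sum_mono2) auto
    also have "\<dots> \<le> k + 1 / real (Suc m)"
      using bounded[OF \<open>m \<in> P\<close>] .
    finally show ?thesis .
  qed
  show "(\<Sum>t\<in>T. \<bar>g t\<bar>) \<le> k"
    by (rule le_if_frequently_le_plus_inverse_Suc[OF \<open>infinite P\<close> bound])
qed

lemma scaled_restriction:
  fixes g :: "'t \<Rightarrow> real"
  assumes "finite E" and sum_E: "(\<Sum>u\<in>E. \<bar>g u\<bar>) \<le> k + d" and "0 \<le> k" "0 < d"
  obtains h where "abs_sum_le Q h k" "\<And>t. g t = 0 \<Longrightarrow> h t = 0" "\<And>t. t \<in> E \<Longrightarrow> \<bar>g t - h t\<bar> \<le> d"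
proof
  define c where "c = k / (k + d)"
  have "0 < k + d"
    using assms(3,4) by linarith
  then have c: "0 \<le> c" "c * (k + d) = k" "1 - c = d / (k + d)"
    using assms(3) by (simp_all add: c_def divide_simps)
  show "abs_sum_le Q (\<lambda>t. if t \<in> E then c * g t else 0) k"
    unfolding abs_sum_le_def
  proof (intro allI impI)
    fix T assume "finite T \<and> T \<subseteq> Q"
    then have "(\<Sum>t\<in>T. \<bar>if t \<in> E then c * g t else 0\<bar>) = (\<Sum>t\<in>T \<inter> E. c * \<bar>g t\<bar>)"
      using c(1) by (subst sum.inter_restrict) (auto intro: sum.cong simp: abs_mult)
    also have "\<dots> = c * (\<Sum>t\<in>T \<inter> E. \<bar>g t\<bar>)"
      by (simp add: sum_distrib_left)
    also have "\<dots> \<le> c * (\<Sum>t\<in>E. \<bar>g t\<bar>)"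
      using \<open>finite E\<close> c(1) by (intro mult_left_mono sum_mono2) auto
    also have "\<dots> \<le> c * (k + d)"
      using sum_E c(1) by (rule mult_left_mono)
    finally show "(\<Sum>t\<in>T. \<bar>if t \<in> E then c * g t else 0\<bar>) \<le> k"
      using c(2) by simp
  qed
  fix t assume "t \<in> E"
  have "\<bar>g t\<bar> \<le> (\<Sum>u\<in>E. \<bar>g u\<bar>)"
    using \<open>t \<in> E\<close> _ \<open>finite E\<close> by (rule member_le_sum) simp
  then have "\<bar>g t\<bar> \<le> k + d"
    using sum_E by linarith
  have "\<bar>g t - c * g t\<bar> = \<bar>(1 - c) * g t\<bar>"
    by (simp add: algebra_simps)
  also have "\<dots> = d / (k + d) * \<bar>g t\<bar>"
    using c(3) \<open>0 < k + d\<close> assms(4) by (simp add: abs_mult)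
  also have "\<dots> \<le> d / (k + d) * (k + d)"
    using \<open>\<bar>g t\<bar> \<le> k + d\<close> \<open>0 < k + d\<close> assms(4) by (intro mult_left_mono) auto
  also have "\<dots> = d"
    using \<open>0 < k + d\<close> by simp
  finally show "\<bar>g t - (if t \<in> E then c * g t else 0)\<bar> \<le> d"
    using \<open>t \<in> E\<close> by simp
qed simp

lemma l1_truncation:
  fixes g :: "'t \<Rightarrow> real"
  assumes "countable C" "{t\<in>Q. g t \<noteq> 0} \<subseteq> C" "0 \<le> k"
  shows "\<exists>h. abs_sum_le Q h k \<and> (\<forall>t. g t = 0 \<longrightarrow> h t = 0)
    \<and> (\<forall>M. (\<Sum>u\<in>enum_prefix C M. \<bar>g u\<bar>) \<le> k + 1 / real (Suc M) \<longrightarrow>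
           (\<forall>t\<in>enum_prefix C M. \<bar>g t - h t\<bar> \<le> 1 / real (Suc M)))"
proof -
  define P where "P = {m. (\<Sum>u\<in>enum_prefix C m. \<bar>g u\<bar>) \<le> k + 1 / real (Suc m)}"
  \<comment> \<open>If infinitely many prefixes are admissible, g itself is bounded by k;
    otherwise cut g at the last admissible prefix and scale it down.\<close>
  show ?thesis
  proof (cases "finite P")
    case False
    with assms have "abs_sum_le Q g k"
      by (intro abs_sum_le_if_frequently_prefix_bounded) (auto simp: P_def)
    then show ?thesis
      by (intro exI[of _ g]) simp
  next
    case True
    have "0 \<in> P"
      using \<open>0 \<le> k\<close> by (simp add: P_def)
    define n where "n = Max P"
    have n: "n \<in> P" "\<And>m. m \<in> P \<Longrightarrow> m \<le> n"
      using True \<open>0 \<in> P\<close> by (auto simp: n_def intro!: Max_in)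
    have sum_n: "(\<Sum>u\<in>enum_prefix C n. \<bar>g u\<bar>) \<le> k + 1 / real (Suc n)"
      using n(1) by (simp add: P_def)
    have "0 < 1 / real (Suc n)"
      by simp
    then obtain h where h: "abs_sum_le Q h k" "\<And>t. g t = 0 \<Longrightarrow> h t = 0"
        "\<And>t. t \<in> enum_prefix C n \<Longrightarrow> \<bar>g t - h t\<bar> \<le> 1 / real (Suc n)"
      using scaled_restriction[OF finite_enum_prefix[OF \<open>countable C\<close>] sum_n \<open>0 \<le> k\<close>] by blast
    have "\<bar>g t - h t\<bar> \<le> 1 / real (Suc M)"
      if "(\<Sum>u\<in>enum_prefix C M. \<bar>g u\<bar>) \<le> k + 1 / real (Suc M)" "t \<in> enum_prefix C M" for M t
    proof -
      have "M \<le> n"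
        using n(2) that(1) by (simp add: P_def)
      have "t \<in> enum_prefix C n"
        using enum_prefix_mono[OF \<open>M \<le> n\<close>] that(2) by (rule subsetD)
      moreover have "1 / real (Suc n) \<le> 1 / real (Suc M)"
        using \<open>M \<le> n\<close> by (intro divide_left_mono) auto
      ultimately show ?thesis
        using h(3) by fastforce
    qed
    with h(1,2) show ?thesis
      by (intro exI[of _ h]) simp
  qed
qed

lemma countable_classes_of_supports:
  fixes G :: "'i \<Rightarrow> 't \<Rightarrow> 'a::zero"
  assumes col: "\<forall>t\<in>Q. countable {i\<in>I. G i t \<noteq> 0}"
    and row: "\<forall>i\<in>I. countable {t\<in>Q. G i t \<noteq> 0}"
  obtains cls :: "'t \<Rightarrow> 't set" and C :: "'i \<Rightarrow> 't set"
  where "\<And>t. countable (cls t)" "\<And>t. t \<in> cls t" "\<And>t. t \<in> Q \<Longrightarrow> cls t \<subseteq> Q"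
    and "\<And>i. countable (C i)" "\<And>i t. i \<in> I \<Longrightarrow> t \<in> Q \<Longrightarrow> G i t \<noteq> 0 \<Longrightarrow> C i = cls t"
proof
  define R where "R = {(t, u). t \<in> Q \<and> u \<in> Q \<and> (\<exists>i\<in>I. G i t \<noteq> 0 \<and> G i u \<noteq> 0)}"
  define cls where "cls t = R\<^sup>* `` {t}" for t
  define base where "base i = (SOME t. t \<in> Q \<and> G i t \<noteq> 0)" for i
  have "countable (R `` {t})" for t
  proof -
    have "R `` {t} \<subseteq> (\<Union>i\<in>{i\<in>I. t \<in> Q \<and> G i t \<noteq> 0}. {u\<in>Q. G i u \<noteq> 0})"
      by (auto simp: R_def)
    moreover have "countable {i\<in>I. t \<in> Q \<and> G i t \<noteq> 0}"
      using col by (cases "t \<in> Q") auto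
    then have "countable (\<Union>i\<in>{i\<in>I. t \<in> Q \<and> G i t \<noteq> 0}. {u\<in>Q. G i u \<noteq> 0})"
      using row by (intro countable_UN) auto
    ultimately show ?thesis
      by (rule countable_subset)
  qed
  then show "countable (cls t)" for t
    unfolding cls_def by (rule countable_rtrancl_Image)
  then show "countable (cls (base i))" for i .
  show "t \<in> cls t" for t
    by (simp add: cls_def)
  show "cls t \<subseteq> Q" if "t \<in> Q" for t
  proof
    fix u assume "u \<in> cls t"
    then have "(t, u) \<in> R\<^sup>*"
      by (simp add: cls_def)
    then show "u \<in> Q"
      using that by (induction rule: rtrancl_induct) (auto simp: R_def)
  qed
  have "sym R"
    by (rule symI) (auto simp: R_def)
  have same_cls: "cls t = cls u" if "i \<in> I" "t \<in> Q" "u \<in> Q" "G i t \<noteq> 0" "G i u \<noteq> 0" for i t u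
    unfolding cls_def using \<open>sym R\<close> by (rule rtrancl_Image_eq_if_sym) (use that in \<open>auto simp: R_def\<close>)
  fix i t assume "i \<in> I" "t \<in> Q" "G i t \<noteq> 0"
  moreover have "base i \<in> Q \<and> G i (base i) \<noteq> 0"
    unfolding base_def using \<open>t \<in> Q\<close> \<open>G i t \<noteq> 0\<close> by (rule someI[of _ t, OF conjI])
  ultimately show "cls (base i) = cls t"
    using same_cls[of i "base i" t] by simp
qed

lemma lim_zero_if_prefix_approx:
  assumes "countable D" "t \<in> D" "D \<subseteq> Q"
    and fin: "\<forall>S. finite S \<and> S \<subseteq> Q \<longrightarrow> le_mod_c0 I (\<lambda>i. \<Sum>u\<in>S. \<bar>G i u\<bar>) k"
    and approx: "\<And>i M. i \<in> I \<Longrightarrow> (\<Sum>u\<in>enum_prefix D M. \<bar>G i u\<bar>) \<le> k i + 1 / real (Suc M) \<Longrightarrow>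
      t \<in> enum_prefix D M \<Longrightarrow> \<bar>G i t - h i t\<bar> \<le> 1 / real (Suc M)"
  shows "lim_zero I (\<lambda>i. G i t - h i t)"
  unfolding lim_zero_def
proof (intro allI impI)
  fix \<epsilon> :: real assume "\<epsilon> > 0"
  then obtain n where "inverse (real (Suc n)) < \<epsilon>"
    using reals_Archimedean by blast
  define M where "M = max n (Suc (to_nat_on D t))"
  define S where "S = enum_prefix D M"
  have "1 / real (Suc M) \<le> 1 / real (Suc n)"
    by (intro divide_left_mono) (auto simp: M_def)
  with \<open>inverse (real (Suc n)) < \<epsilon>\<close> have small: "1 / real (Suc M) < \<epsilon>"
    by (simp add: inverse_eq_divide)
  have "t \<in> S"
    using \<open>t \<in> D\<close> by (simp add: S_def M_def enum_prefix_def)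
  have "finite S"
    using finite_enum_prefix[OF \<open>countable D\<close>] by (simp add: S_def)
  moreover have "S \<subseteq> Q"
    unfolding S_def using enum_prefix_subset \<open>D \<subseteq> Q\<close> by (rule order_trans)
  ultimately have "finite {i\<in>I. k i + 1 / real (Suc M) \<le> (\<Sum>u\<in>S. \<bar>G i u\<bar>)}"
    using fin small \<open>\<epsilon> > 0\<close> by (simp add: le_mod_c0_def)
  moreover have "{i\<in>I. \<epsilon> \<le> \<bar>G i t - h i t\<bar>} \<subseteq> {i\<in>I. k i + 1 / real (Suc M) \<le> (\<Sum>u\<in>S. \<bar>G i u\<bar>)}"
  proof (rule subsetI, rule ccontr)
    fix i assume "i \<in> {i\<in>I. \<epsilon> \<le> \<bar>G i t - h i t\<bar>}"
      and "i \<notin> {i\<in>I. k i + 1 / real (Suc M) \<le> (\<Sum>u\<in>S. \<bar>G i u\<bar>)}"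
    then have i: "i \<in> I" "\<epsilon> \<le> \<bar>G i t - h i t\<bar>" "(\<Sum>u\<in>S. \<bar>G i u\<bar>) \<le> k i + 1 / real (Suc M)"
      by auto
    then have "\<bar>G i t - h i t\<bar> \<le> 1 / real (Suc M)"
      using approx[of i M] \<open>t \<in> S\<close> unfolding S_def by simp
    then show False
      using i(2) small by linarith
  qed
  ultimately show "finite {i\<in>I. \<epsilon> \<le> \<bar>G i t - h i t\<bar>}"
    by (rule finite_subset[rotated])
qed

lemma c0l1_bounded_decomposition:
  fixes G :: "'i \<Rightarrow> 't \<Rightarrow> real"
  assumes k_nonneg: "\<forall>i\<in>I. 0 \<le> k i"
    and fin: "\<forall>S. finite S \<and> S \<subseteq> Q \<longrightarrow> le_mod_c0 I (\<lambda>i. \<Sum>t\<in>S. \<bar>G i t\<bar>) k"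
    and col: "\<forall>t\<in>Q. countable {i\<in>I. G i t \<noteq> 0}"
    and row: "\<forall>i\<in>I. countable {t\<in>Q. G i t \<noteq> 0}"
  obtains h where "\<forall>i\<in>I. abs_sum_le Q (h i) (k i)"
    and "\<forall>t\<in>Q. lim_zero I (\<lambda>i. G i t - h i t)"
proof -
  obtain cls :: "'t \<Rightarrow> 't set" and C :: "'i \<Rightarrow> 't set"
    where cls: "\<And>t. countable (cls t)" "\<And>t. t \<in> cls t" "\<And>t. t \<in> Q \<Longrightarrow> cls t \<subseteq> Q"
      and C: "\<And>i. countable (C i)" "\<And>i t. i \<in> I \<Longrightarrow> t \<in> Q \<Longrightarrow> G i t \<noteq> 0 \<Longrightarrow> C i = cls t"
    using countable_classes_of_supports[OF col row] by blast
  have "\<forall>i\<in>I. \<exists>h. abs_sum_le Q h (k i) \<and> (\<forall>t. G i t = 0 \<longrightarrow> h t = 0)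
      \<and> (\<forall>M. (\<Sum>u\<in>enum_prefix (C i) M. \<bar>G i u\<bar>) \<le> k i + 1 / real (Suc M) \<longrightarrow>
          (\<forall>t\<in>enum_prefix (C i) M. \<bar>G i t - h t\<bar> \<le> 1 / real (Suc M)))"
    (is "\<forall>i\<in>I. \<exists>h. ?truncates i h")
  proof
    fix i assume "i \<in> I"
    have "{t\<in>Q. G i t \<noteq> 0} \<subseteq> C i"
      using C(2)[OF \<open>i \<in> I\<close>] cls(2) by blast
    with C(1) k_nonneg \<open>i \<in> I\<close> show "\<exists>h. ?truncates i h"
      by (intro l1_truncation) simp_all
  qed
  then obtain h where h_sum: "\<And>i. i \<in> I \<Longrightarrow> abs_sum_le Q (h i) (k i)"
    and h_zero: "\<And>i t. i \<in> I \<Longrightarrow> G i t = 0 \<Longrightarrow> h i t = 0"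
    and h_approx: "\<And>i M t. i \<in> I \<Longrightarrow> (\<Sum>u\<in>enum_prefix (C i) M. \<bar>G i u\<bar>) \<le> k i + 1 / real (Suc M) \<Longrightarrow>
          t \<in> enum_prefix (C i) M \<Longrightarrow> \<bar>G i t - h i t\<bar> \<le> 1 / real (Suc M)"
    by metis
  have "lim_zero I (\<lambda>i. G i t - h i t)" if "t \<in> Q" for t
  proof (rule lim_zero_if_prefix_approx[OF cls(1,2) cls(3)[OF that] fin])
    fix i M
    assume "i \<in> I" "(\<Sum>u\<in>enum_prefix (cls t) M. \<bar>G i u\<bar>) \<le> k i + 1 / real (Suc M)"
      "t \<in> enum_prefix (cls t) M"
    then show "\<bar>G i t - h i t\<bar> \<le> 1 / real (Suc M)"
      using h_zero[of i t] h_approx[of i M t] C(2)[of i t] \<open>t \<in> Q\<close>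
      by (cases "G i t = 0") simp_all
  qed
  with h_sum show ?thesis
    using that by blast
qed

definition c0_countable_split :: "'i set \<Rightarrow> 't set \<Rightarrow> ('i \<Rightarrow> 't \<Rightarrow> real) \<Rightarrow> bool" where
  "c0_countable_split I Q F \<longleftrightarrow> (\<exists>A B. A \<inter> B = {} \<and> A \<union> B = I \<times> Q
      \<and> (\<forall>t\<in>Q. lim_zero I (\<lambda>i. F i t * indicator A (i, t)))
      \<and> (\<forall>i\<in>I. countable {t\<in>Q. (i, t) \<in> B}))"

lemma type_c0l1_imp_c0_countable_split:
  assumes "type_c0l1 I Q F"
  shows "c0_countable_split I Q F"
proof -
  obtain a b C where ab: "\<forall>i\<in>I. \<forall>t\<in>Q. F i t = a i t + b i t"
    and a: "\<forall>t\<in>Q. lim_zero I (\<lambda>i. a i t)" and b: "\<forall>i\<in>I. abs_sum_le Q (b i) C"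
    using assms unfolding type_c0l1_def by blast
  define B where "B = {(i, t). i \<in> I \<and> t \<in> Q \<and> b i t \<noteq> 0}"
  define A where "A = I \<times> Q - B"
  have "lim_zero I (\<lambda>i. F i t * indicator A (i, t))" if "t \<in> Q" for t
  proof (rule lim_zero_abs_le)
    show "lim_zero I (\<lambda>i. a i t)"
      using a that by blast
    show "\<bar>F i t * indicator A (i, t)\<bar> \<le> \<bar>a i t\<bar>" if "i \<in> I" for i
      using ab \<open>t \<in> Q\<close> that by (auto simp: A_def B_def indicator_def)
  qed
  moreover have "countable {t\<in>Q. (i, t) \<in> B}" if "i \<in> I" for i
    using abs_sum_le_countable_support b that by (auto simp: B_def)
  moreover have "A \<inter> B = {}" "A \<union> B = I \<times> Q"
    by (auto simp: A_def B_def)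
  ultimately show ?thesis
    unfolding c0_countable_split_def by blast
qed

lemma c0_countable_split_imp_type_c0l1_bounded:
  assumes k_nonneg: "\<forall>i\<in>I. 0 \<le> k i"
    and k_bdd: "\<exists>K. \<forall>i\<in>I. k i \<le> K"
    and fin: "\<forall>S. finite S \<and> S \<subseteq> Q \<longrightarrow> le_mod_c0 I (\<lambda>i. \<Sum>t\<in>S. \<bar>F i t\<bar>) k"
    and col: "\<forall>t\<in>Q. countable {i\<in>I. F i t \<noteq> 0}"
    and split: "c0_countable_split I Q F"
  shows "type_c0l1_bounded I Q F k"
proof -
  obtain A B where AB: "A \<inter> B = {}" "A \<union> B = I \<times> Q"
    and A: "\<forall>t\<in>Q. lim_zero I (\<lambda>i. F i t * indicator A (i, t))"
    and B: "\<forall>i\<in>I. countable {t\<in>Q. (i, t) \<in> B}"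
    using split unfolding c0_countable_split_def by blast
  define G where "G i t = F i t * indicator B (i, t)" for i t
  have fin_G: "\<forall>S. finite S \<and> S \<subseteq> Q \<longrightarrow> le_mod_c0 I (\<lambda>i. \<Sum>t\<in>S. \<bar>G i t\<bar>) k"
  proof (intro allI impI)
    fix S assume "finite S \<and> S \<subseteq> Q"
    show "le_mod_c0 I (\<lambda>i. \<Sum>t\<in>S. \<bar>G i t\<bar>) k"
    proof (rule le_mod_c0_mono)
      show "le_mod_c0 I (\<lambda>i. \<Sum>t\<in>S. \<bar>F i t\<bar>) k"
        using fin \<open>finite S \<and> S \<subseteq> Q\<close> by blast
      show "(\<Sum>t\<in>S. \<bar>G i t\<bar>) \<le> (\<Sum>t\<in>S. \<bar>F i t\<bar>)" for i
        by (rule sum_mono) (simp add: G_def indicator_def)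
    qed
  qed
  have col_G: "\<forall>t\<in>Q. countable {i\<in>I. G i t \<noteq> 0}"
  proof
    fix t assume "t \<in> Q"
    show "countable {i\<in>I. G i t \<noteq> 0}"
      by (rule countable_subset[OF _ col[rule_format, OF \<open>t \<in> Q\<close>]]) (auto simp: G_def)
  qed
  have row_G: "\<forall>i\<in>I. countable {t\<in>Q. G i t \<noteq> 0}"
  proof
    fix i assume "i \<in> I"
    show "countable {t\<in>Q. G i t \<noteq> 0}"
      by (rule countable_subset[OF _ B[rule_format, OF \<open>i \<in> I\<close>]]) (auto simp: G_def indicator_def)
  qed
  obtain h where h: "\<forall>i\<in>I. abs_sum_le Q (h i) (k i)"
    "\<forall>t\<in>Q. lim_zero I (\<lambda>i. G i t - h i t)"
    using c0l1_bounded_decomposition[OF k_nonneg fin_G col_G row_G] by blast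
  have "lim_zero I (\<lambda>i. F i t - h i t)" if "t \<in> Q" for t
  proof (rule lim_zero_abs_le)
    show "lim_zero I (\<lambda>i. F i t * indicator A (i, t) + (G i t - h i t))"
      using A h(2) that by (intro lim_zero_add) auto
    show "\<bar>F i t - h i t\<bar> \<le> \<bar>F i t * indicator A (i, t) + (G i t - h i t)\<bar>" if "i \<in> I" for i
      using AB \<open>i \<in> I\<close> \<open>t \<in> Q\<close> by (auto simp: G_def indicator_def)
  qed
  moreover obtain K where "\<forall>i\<in>I. k i \<le> K"
    using k_bdd by blast
  then have "\<exists>K. \<forall>i\<in>I. abs_sum_le Q (h i) K"
    using h(1) abs_sum_le_mono by blast
  ultimately show ?thesis
    unfolding type_c0l1_bounded_def using h(1)
    by (intro exI[of _ "\<lambda>i t. F i t - h i t"] exI[of _ h]) auto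
qed

theorem proposition2p22:
  fixes I :: "'i set" and Q :: "'t set" and F :: "'i \<Rightarrow> 't \<Rightarrow> real" and k :: "'i \<Rightarrow> real"
  assumes k_nonneg: "\<forall>i\<in>I. 0 \<le> k i"
    and k_bdd: "\<exists>K. \<forall>i\<in>I. k i \<le> K"
    and fin: "\<forall>S. finite S \<and> S \<subseteq> Q \<longrightarrow> le_mod_c0 I (\<lambda>i. \<Sum>t\<in>S. \<bar>F i t\<bar>) k"
    and cnt: "\<forall>t\<in>Q. countable {i\<in>I. F i t \<noteq> 0}"
  shows "(type_c0l1 I Q F \<longleftrightarrow>
           (\<exists>A B. A \<inter> B = {} \<and> A \<union> B = I \<times> Q
              \<and> (\<forall>t\<in>Q. lim_zero I (\<lambda>i. F i t * indicator A (i, t)))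
              \<and> (\<forall>i\<in>I. countable {t\<in>Q. (i, t) \<in> B})))
       \<and> ((\<exists>A B. A \<inter> B = {} \<and> A \<union> B = I \<times> Q
              \<and> (\<forall>t\<in>Q. lim_zero I (\<lambda>i. F i t * indicator A (i, t)))
              \<and> (\<forall>i\<in>I. countable {t\<in>Q. (i, t) \<in> B}))
           \<longleftrightarrow> type_c0l1_bounded I Q F k)"
proof -
  have "type_c0l1_bounded I Q F k \<Longrightarrow> type_c0l1 I Q F"
    unfolding type_c0l1_bounded_def type_c0l1_def by blast
  moreover note type_c0l1_imp_c0_countable_split[of I Q F]
  moreover note c0_countable_split_imp_type_c0l1_bounded[OF assms]
  ultimately show ?thesis
    unfolding c0_countable_split_def[symmetric] by blast
qed

end
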